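(* Let $Q$ access points be at fixed positions $\mathbf{o}_1,\dots,\mathbf{o}_Q\in\mathbb{R}^2$ and let a user move on $\mathbf{x}_t=\mathbf{x}+t\mathbf{v}$, $t=1,2,\dots$, with $\mathbf{v}\neq\mathbf{0}$, not passing through any AP. Put $\bm{l}_q=\mathbf{x}-\mathbf{o}_q$, $\mathbf{d}_{t,q}=\bm{l}_q+t\mathbf{v}$, $d_{t,q}=\|\mathbf{d}_{t,q}\|$, $d_{\min}=\min_{t,q}d_{t,q}>0$. Let $C_0=G_1N_{\mathrm t}(N_{\mathrm t}^2-1)/(\sigma_{\mathrm n}^2d_{\min}^2)$, $$\mathbf{A}_{T,x}=\sum_{q=1}^{Q}\sum_{t=1}^{T}\frac{d_{t,q}^2\mathbf{I}-\mathbf{d}_{t,q}\mathbf{d}_{t,q}^{\mathrm T}}{d_{t,q}^4},\qquad \bar\Delta_{T,x}=\mathrm{tr}\{(C_0\mathbf{A}_{T,x})^{-1}\}.$$ Then the CRLB of $\mathbf{x}$ satisfies $B(\mathbf{x})=\mathrm{tr}\{\mathbf{F}_{T,x}^{-1}\}\ge\bar\Delta_{T,x}$, with equality achieved when $d_{t,q}=d_{\min}$ and $\phi_{t,q}=0$ for all $t,q$. In addition, $\bar\Delta_{T,x}$ is strictly decreasing in $T$, provided that at least two vectors in $\{\bm{l}_1,\dots,\bm{l}_Q,\mathbf{v}\}$ are linearly independent, but $\bar\Delta_{T,x}$ converges to a strictly positive number as $T\to\infty$.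
   Context: Each AP carries an $N_{\mathrm t}$-element uniform linear array; $G_1>0$ is an antenna-configuration constant and $\sigma_{\mathrm n}^2>0$ is the noise variance. The AoD measurement from AP $q$ at time $t$ is Gaussian with mean the geometric azimuth angle from $\mathbf{o}_q$ to $\mathbf{x}_t$ and variance $\sigma_{\theta,t,q}^2=d_{t,q}^2\sigma_{\mathrm n}^2/(G_1N_{\mathrm t}(N_{\mathrm t}^2-1)\cos^2\phi_{t,q})$, where $\phi_{t,q}$ is the angle of the user relative to the array reference direction of AP $q$ (the single-snapshot ULA angle CRLB). Measurements are independent. $\mathbf{F}_{T,x}$ is the Fisher information of the initial position $\mathbf{x}$ (diagonal block of the FIM of $(\mathbf{x},\mathbf{v})$), namely $\mathbf{F}_{T,x}=\sum_{t=1}^T\sum_{q=1}^Q\frac{1}{\sigma_{\theta,t,q}^2d_{t,q}^4}(d_{t,q}^2\mathbf{I}-\mathbf{d}_{t,q}\mathbf{d}_{t,q}^{\mathrm T})$. *)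

theory Defs
  imports "HOL-Analysis.Analysis"
begin

definition lvec :: "real^2 \<Rightarrow> (nat \<Rightarrow> real^2) \<Rightarrow> nat \<Rightarrow> real^2" where
  "lvec x ap q = x - ap q"

definition dvec :: "real^2 \<Rightarrow> real^2 \<Rightarrow> (nat \<Rightarrow> real^2) \<Rightarrow> nat \<Rightarrow> nat \<Rightarrow> real^2" where
  "dvec x v ap t q = lvec x ap q + real t *\<^sub>R v"

definition outer :: "real^2 \<Rightarrow> real^2^2" where
  "outer u = (\<chi> i j. u $ i * u $ j)"

definition dmin :: "real^2 \<Rightarrow> real^2 \<Rightarrow> (nat \<Rightarrow> real^2) \<Rightarrow> nat \<Rightarrow> real" where
  "dmin x v ap Q = Inf {norm (dvec x v ap t q) | t q. 1 \<le> t \<and> q \<in> {1..Q}}"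

definition C0 :: "real \<Rightarrow> nat \<Rightarrow> real \<Rightarrow> real \<Rightarrow> real" where
  "C0 G1 Nt sn2 dm = G1 * real Nt * (real Nt ^ 2 - 1) / (sn2 * dm ^ 2)"

definition Amat :: "real^2 \<Rightarrow> real^2 \<Rightarrow> (nat \<Rightarrow> real^2) \<Rightarrow> nat \<Rightarrow> nat \<Rightarrow> real^2^2" where
  "Amat x v ap Q T = (\<Sum>q=1..Q. \<Sum>t=1..T.
      (1 / norm (dvec x v ap t q) ^ 4) *\<^sub>R
        ((norm (dvec x v ap t q))\<^sup>2 *\<^sub>R mat 1 - outer (dvec x v ap t q)))"

definition Delta_bar :: "real \<Rightarrow> nat \<Rightarrow> real \<Rightarrow> real^2 \<Rightarrow> real^2 \<Rightarrow> (nat \<Rightarrow> real^2) \<Rightarrow> nat \<Rightarrow> nat \<Rightarrow> real" where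
  "Delta_bar G1 Nt sn2 x v ap Q T =
     trace (matrix_inv (C0 G1 Nt sn2 (dmin x v ap Q) *\<^sub>R Amat x v ap Q T))"

text \<open>AoD measurement variance (single-snapshot ULA angle CRLB); phi t q is the angle of the
  user relative to the array reference direction of AP q at time t.\<close>
definition sigma_theta_sq :: "real \<Rightarrow> nat \<Rightarrow> real \<Rightarrow> real \<Rightarrow> real \<Rightarrow> real" where
  "sigma_theta_sq G1 Nt sn2 d ph = d\<^sup>2 * sn2 / (G1 * real Nt * (real Nt ^ 2 - 1) * (cos ph)\<^sup>2)"

definition Fmat :: "real \<Rightarrow> nat \<Rightarrow> real \<Rightarrow> (nat \<Rightarrow> nat \<Rightarrow> real) \<Rightarrow> real^2 \<Rightarrow> real^2 \<Rightarrow> (nat \<Rightarrow> real^2) \<Rightarrow> nat \<Rightarrow> nat \<Rightarrow> real^2^2" where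
  "Fmat G1 Nt sn2 phi x v ap Q T = (\<Sum>t=1..T. \<Sum>q=1..Q.
      (1 / (sigma_theta_sq G1 Nt sn2 (norm (dvec x v ap t q)) (phi t q) * norm (dvec x v ap t q) ^ 4)) *\<^sub>R
        ((norm (dvec x v ap t q))\<^sup>2 *\<^sub>R mat 1 - outer (dvec x v ap t q)))"

definition CRLB :: "real \<Rightarrow> nat \<Rightarrow> real \<Rightarrow> (nat \<Rightarrow> nat \<Rightarrow> real) \<Rightarrow> real^2 \<Rightarrow> real^2 \<Rightarrow> (nat \<Rightarrow> real^2) \<Rightarrow> nat \<Rightarrow> nat \<Rightarrow> real" where
  "CRLB G1 Nt sn2 phi x v ap Q T = trace (matrix_inv (Fmat G1 Nt sn2 phi x v ap Q T))"

end

theory Submission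
  imports Defs
begin

(* Each measurement (t, q) contributes a nonnegative multiple of the positive semidefinite
   2x2 matrix K(d) = (|d|^2 I - d d^T) / |d|^4, with d = d_{t,q}: A_{T,x} is the sum of these
   matrices and F_{T,x} their sum weighted by G1 Nt (Nt^2 - 1) cos^2 phi / (sigma_n^2 d^2),
   which is at most C0. So C0 A_{T,x} = F_{T,x} + H with H positive semidefinite, and for 2x2
   matrices tr (X^-1) = tr X / det X can only decrease when a positive semidefinite matrix is
   added to X, strictly so if the added matrix has positive trace. This gives B(x) >= Delta_bar
   (with equality when all weights equal C0) and the strict decrease in T.
   If l_q and v are independent, det (K(d_{1,q}) + K(d_{2,q})) > 0, so A_{T,x} is invertible
   for T >= 2. Since tr (X^-1) >= 4 / tr X and tr A_{T,x} <= sum_q sum_t 1 / d_{t,q}^2, a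
   convergent series because d_{t,q} grows linearly in t, the decreasing sequence Delta_bar
   stays above a positive constant, hence has a positive limit. *)

lemma trace_2: "trace (A :: 'a::comm_semiring_1^2^2) = A$1$1 + A$2$2"
  by (simp add: trace_def sum_2)

lemma trace_scaleR: "trace (c *\<^sub>R (A :: real^'n^'n)) = c * trace A"
  by (simp add: trace_def sum_distrib_left)

lemma trace_sum: "trace (sum f S :: 'a::comm_semiring_1^'n^'n) = (\<Sum>i\<in>S. trace (f i))"
  by (simp add: trace_def sum_component sum.swap[of _ UNIV S])

lemma det_scaleR_2: "det (c *\<^sub>R (A :: real^2^2)) = c\<^sup>2 * det A"
  by (simp add: det_2 power2_eq_square algebra_simps)

lemma matrix_inv_eqI:
  fixes A B :: "'a::semiring_1^'n^'n"
  assumes "A ** B = mat 1" "B ** A = mat 1"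
  shows "matrix_inv A = B"
proof -
  have "A ** matrix_inv A = mat 1 \<and> matrix_inv A ** A = mat 1"
    unfolding matrix_inv_def by (rule someI[of _ B]) (use assms in simp)
  then have "B = B ** (A ** matrix_inv A)" by simp
  also have "\<dots> = matrix_inv A" by (simp add: matrix_mul_assoc assms(2))
  finally show ?thesis ..
qed

lemma trace_matrix_inv_2:
  fixes A :: "real^2^2"
  assumes "det A \<noteq> 0"
  shows "trace (matrix_inv A) = trace A / det A"
proof -
  define d where "d = det A"
  have d: "A$1$1 * A$2$2 = d + A$1$2 * A$2$1" "d \<noteq> 0"
    using assms by (simp_all add: d_def det_2)
  define B :: "real^2^2" where
    "B = (\<chi> i j. (if i = j then A$(3-i)$(3-j) else - A$i$j) / d)"
  have B: "B$1$1 = A$2$2 / d" "B$1$2 = - A$1$2 / d" "B$2$1 = - A$2$1 / d" "B$2$2 = A$1$1 / d"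
    by (simp_all add: B_def)
  have "A ** B = mat 1" "B ** A = mat 1"
    using d by (simp add: vec_eq_iff forall_2 matrix_matrix_mult_def sum_2 B mat_def
        field_simps; simp add: algebra_simps)+
  then have "matrix_inv A = B" by (rule matrix_inv_eqI)
  then show ?thesis by (simp add: trace_2 B add_divide_distrib d_def)
qed

definition psd_matrix :: "real^'n^'n \<Rightarrow> bool" where
  "psd_matrix M \<longleftrightarrow> (\<forall>i j. M$i$j = M$j$i) \<and> (\<forall>x. 0 \<le> x \<bullet> (M *v x))"

lemma psd_matrix_add: "psd_matrix A \<Longrightarrow> psd_matrix B \<Longrightarrow> psd_matrix (A + B)"
  by (simp add: psd_matrix_def matrix_vector_mult_add_rdistrib inner_add_right)

lemma psd_matrix_scaleR: "psd_matrix A \<Longrightarrow> 0 \<le> c \<Longrightarrow> psd_matrix (c *\<^sub>R A)"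
  by (simp add: psd_matrix_def scaleR_matrix_vector_assoc[symmetric])

lemma psd_matrix_sum: "(\<And>i. i \<in> S \<Longrightarrow> psd_matrix (f i)) \<Longrightarrow> psd_matrix (sum f S)"
proof (induction S rule: infinite_finite_induct)
  case (infinite S)
  then show ?case by (simp add: psd_matrix_def)
next
  case empty
  then show ?case by (simp add: psd_matrix_def)
next
  case (insert i S)
  then show ?case by (simp add: psd_matrix_add)
qed

text \<open>This is \<open>0 \<le> tr (P X)\<close> for the positive semidefinite matrices
  \<open>P = [[p, r], [r, s]]\<close> and \<open>X = [[x, y], [y, z]]\<close>.\<close>

lemma psd_pairing_nonneg:
  fixes p r s x y z :: real
  assumes "0 \<le> p" "0 \<le> s" "r\<^sup>2 \<le> p * s" "0 \<le> x" "0 \<le> z" "y\<^sup>2 \<le> x * z"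
  shows "0 \<le> p * x + s * z + 2 * r * y"
proof -
  have "(2 * r * y)\<^sup>2 = 4 * (r\<^sup>2 * y\<^sup>2)" by (simp add: power_mult_distrib)
  also have "\<dots> \<le> 4 * ((p * s) * (x * z))"
    using assms by (intro mult_left_mono mult_mono) auto
  also have "\<dots> \<le> (p * x + s * z)\<^sup>2"
    using sum_squares_ge_zero[of "p * x - s * z" 0] by (simp add: power2_eq_square algebra_simps)
  finally have "\<bar>2 * r * y\<bar> \<le> p * x + s * z"
    using power2_le_imp_le[of "\<bar>2 * r * y\<bar>" "p * x + s * z"] assms by simp
  then show ?thesis by linarith
qed

lemma psd_pairing_pos:
  fixes p r s x y z :: real
  assumes "0 \<le> p" "0 \<le> s" "r\<^sup>2 \<le> p * s" "0 < p + s" "0 < x" "0 < z" "y\<^sup>2 < x * z"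
  shows "0 < p * x + s * z + 2 * r * y"
proof (cases "r * y = 0")
  case True
  have "0 < p * x \<or> 0 < s * z" using assms(1,2,4-6) by (auto simp: zero_less_mult_iff)
  moreover have "0 \<le> p * x" "0 \<le> s * z" using assms(1,2,5,6) by simp_all
  ultimately show ?thesis using True by auto
next
  case False
  have "(2 * r * y)\<^sup>2 = 4 * (r\<^sup>2 * y\<^sup>2)" by (simp add: power_mult_distrib)
  also have "\<dots> < 4 * (r\<^sup>2 * (x * z))"
    using assms(7) False by simp
  also have "\<dots> \<le> 4 * ((p * s) * (x * z))"
    using assms by (intro mult_left_mono mult_right_mono) auto
  also have "\<dots> \<le> (p * x + s * z)\<^sup>2"
    using sum_squares_ge_zero[of "p * x - s * z" 0] by (simp add: power2_eq_square algebra_simps)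
  finally have "\<bar>2 * r * y\<bar> < p * x + s * z"
    using power2_less_imp_less[of "\<bar>2 * r * y\<bar>" "p * x + s * z"] assms
    by (simp add: add_nonneg_nonneg)
  then show ?thesis by linarith
qed

lemma quadratic_form_2:
  fixes M :: "real^2^2"
  shows "x \<bullet> (M *v x) = M$1$1 * (x$1)\<^sup>2 + (M$1$2 + M$2$1) * (x$1 * x$2) + M$2$2 * (x$2)\<^sup>2"
  by (simp add: inner_vec_def matrix_vector_mult_def sum_2 power2_eq_square algebra_simps)

lemma psd_matrix_2_iff:
  fixes M :: "real^2^2"
  shows "psd_matrix M \<longleftrightarrow>
    M$2$1 = M$1$2 \<and> 0 \<le> M$1$1 \<and> 0 \<le> M$2$2 \<and> (M$1$2)\<^sup>2 \<le> M$1$1 * M$2$2"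
    (is "_ \<longleftrightarrow> ?sym \<and> ?a \<and> ?c \<and> ?det")
proof
  assume M: "psd_matrix M"
  have sym: ?sym using M by (simp add: psd_matrix_def)
  have form: "0 \<le> M$1$1 * x1\<^sup>2 + 2 * M$1$2 * (x1 * x2) + M$2$2 * x2\<^sup>2" for x1 x2
  proof -
    have "0 \<le> vector [x1, x2] \<bullet> (M *v vector [x1, x2])"
      using M by (simp add: psd_matrix_def)
    then show ?thesis by (simp add: quadratic_form_2 sym)
  qed
  have a: ?a using form[of 1 0] by simp
  have c: ?c using form[of 0 1] by simp
  have ?det
  proof (rule ccontr)
    assume neg: "\<not> ?det"
    have D: "M$1$1 * M$2$2 - (M$1$2)\<^sup>2 < 0" using neg by simp
    have "0 \<le> M$1$1 * (M$1$1 * M$2$2 - (M$1$2)\<^sup>2)"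
      using form[of "M$1$2" "- M$1$1"] by (simp add: power2_eq_square algebra_simps)
    then have a0: "M$1$1 = 0" using a D by (simp add: zero_le_mult_iff)
    have "0 \<le> M$2$2 * (M$1$1 * M$2$2 - (M$1$2)\<^sup>2)"
      using form[of "M$2$2" "- M$1$2"] by (simp add: power2_eq_square algebra_simps)
    then have c0: "M$2$2 = 0" using c D by (simp add: zero_le_mult_iff)
    show False using form[of "M$1$2" "-1"] neg a0 c0 by (simp add: power2_eq_square)
  qed
  with sym a c show "?sym \<and> ?a \<and> ?c \<and> ?det" by blast
next
  assume M: "?sym \<and> ?a \<and> ?c \<and> ?det"
  have "0 \<le> x \<bullet> (M *v x)" for x :: "real^2"
  proof -
    have "(x$1 * x$2)\<^sup>2 \<le> (x$1)\<^sup>2 * (x$2)\<^sup>2" by (simp add: power_mult_distrib)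
    then have "0 \<le> M$1$1 * (x$1)\<^sup>2 + M$2$2 * (x$2)\<^sup>2 + 2 * M$1$2 * (x$1 * x$2)"
      using M by (intro psd_pairing_nonneg) auto
    then show ?thesis using M by (simp add: quadratic_form_2 algebra_simps)
  qed
  then show "psd_matrix M" using M by (auto simp: psd_matrix_def forall_2)
qed

lemma psd_matrix_2_det_nonneg: "psd_matrix A \<Longrightarrow> 0 \<le> det A" for A :: "real^2^2"
  by (simp add: psd_matrix_2_iff det_2 power2_eq_square)

lemma psd_matrix_2_invertible_iff: "psd_matrix A \<Longrightarrow> invertible A \<longleftrightarrow> 0 < det A"
  for A :: "real^2^2"
  using psd_matrix_2_det_nonneg[of A] by (auto simp: invertible_det_nz)

lemma psd_matrix_2_trace_pos:
  fixes A :: "real^2^2"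
  assumes "psd_matrix A" "0 < det A"
  shows "0 < trace A"
proof -
  have "0 \<le> A$1$1" "0 \<le> A$2$2" "0 < A$1$1 * A$2$2"
    using assms by (auto simp: psd_matrix_2_iff det_2 power2_eq_square
        intro: order.strict_trans1[OF zero_le_square])
  then show ?thesis by (simp add: trace_2 zero_less_mult_iff)
qed

lemma det_add_psd_matrix_2:
  fixes F H :: "real^2^2"
  assumes "psd_matrix F" "psd_matrix H"
  shows "det F \<le> det (F + H)"
proof -
  obtain a b c where F: "F$1$1 = a" "F$1$2 = b" "F$2$1 = b" "F$2$2 = c"
    and "0 \<le> a" "0 \<le> c" "b\<^sup>2 \<le> a * c"
    using assms(1) by (auto simp: psd_matrix_2_iff)
  obtain p r s where H: "H$1$1 = p" "H$1$2 = r" "H$2$1 = r" "H$2$2 = s"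
    and "0 \<le> p" "0 \<le> s" "r\<^sup>2 \<le> p * s"
    using assms(2) by (auto simp: psd_matrix_2_iff)
  have "det (F + H) - det F = (p * s - r\<^sup>2) + (p * c + s * a + 2 * r * (- b))"
    by (simp add: det_2 F H power2_eq_square algebra_simps)
  moreover have "0 \<le> p * c + s * a + 2 * r * (- b)"
    using \<open>0 \<le> a\<close> \<open>0 \<le> c\<close> \<open>b\<^sup>2 \<le> a * c\<close> \<open>0 \<le> p\<close> \<open>0 \<le> s\<close> \<open>r\<^sup>2 \<le> p * s\<close>
    by (intro psd_pairing_nonneg) (auto simp: mult.commute)
  ultimately show ?thesis using \<open>r\<^sup>2 \<le> p * s\<close> by linarith
qed

lemma trace_matrix_inv_add_psd_2:
  fixes F H :: "real^2^2"
  assumes F: "psd_matrix F" "0 < det F" and H: "psd_matrix H"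
  shows "trace (matrix_inv (F + H)) \<le> trace (matrix_inv F)"
    and "0 < trace H \<Longrightarrow> trace (matrix_inv (F + H)) < trace (matrix_inv F)"
proof -
  obtain a b c where Fe: "F$1$1 = a" "F$1$2 = b" "F$2$1 = b" "F$2$2 = c"
    and a: "0 \<le> a" and c: "0 \<le> c"
    using F(1) by (auto simp: psd_matrix_2_iff)
  obtain p r s where He: "H$1$1 = p" "H$1$2 = r" "H$2$1 = r" "H$2$2 = s"
    and p: "0 \<le> p" and s: "0 \<le> s" and ps: "r\<^sup>2 \<le> p * s"
    using H by (auto simp: psd_matrix_2_iff)
  have detF: "det F = a * c - b\<^sup>2" by (simp add: det_2 Fe power2_eq_square)
  have detG: "0 < det (F + H)" using det_add_psd_matrix_2[OF F(1) H] F(2) by linarith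
  txt \<open>With \<open>adj F = [[c, -b], [-b, a]]\<close>, the second summand is \<open>tr (H (adj F)\<^sup>2)\<close>,
    and \<open>(adj F)\<^sup>2\<close> is positive definite with determinant \<open>(det F)\<^sup>2\<close>.\<close>
  have key: "trace F * det (F + H) - trace (F + H) * det F
      = (a + c) * (p * s - r\<^sup>2) + (p * (c\<^sup>2 + b\<^sup>2) + s * (a\<^sup>2 + b\<^sup>2) + 2 * r * (- b * (a + c)))"
    unfolding trace_2 det_2 vector_add_component Fe He
    by (simp add: power2_eq_square algebra_simps)
  have "0 < a * c" using F(2) detF zero_le_power2[of b] by linarith
  then have "0 < a" "0 < c" using a c by (auto simp: zero_less_mult_iff)
  then have adj_sq_pos: "0 < c\<^sup>2 + b\<^sup>2" "0 < a\<^sup>2 + b\<^sup>2" by (simp_all add: add_pos_nonneg)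
  have "(c\<^sup>2 + b\<^sup>2) * (a\<^sup>2 + b\<^sup>2) - (- b * (a + c))\<^sup>2 = (det F)\<^sup>2"
    by (simp add: detF power2_eq_square algebra_simps)
  then have adj_sq_det: "(- b * (a + c))\<^sup>2 < (c\<^sup>2 + b\<^sup>2) * (a\<^sup>2 + b\<^sup>2)"
    using F(2) zero_less_power[of "det F" 2] by linarith
  have det_H_term: "0 \<le> (a + c) * (p * s - r\<^sup>2)" using a c ps by simp
  have trace_inv_iff: "trace (matrix_inv (F + H)) \<le> trace (matrix_inv F) \<longleftrightarrow>
      trace (F + H) * det F \<le> trace F * det (F + H)"
    "trace (matrix_inv (F + H)) < trace (matrix_inv F) \<longleftrightarrow>
      trace (F + H) * det F < trace F * det (F + H)"
    using detG F(2) by (simp_all add: trace_matrix_inv_2 divide_simps)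
  have "0 \<le> p * (c\<^sup>2 + b\<^sup>2) + s * (a\<^sup>2 + b\<^sup>2) + 2 * r * (- b * (a + c))"
    using adj_sq_pos adj_sq_det by (intro psd_pairing_nonneg p s ps) auto
  then show "trace (matrix_inv (F + H)) \<le> trace (matrix_inv F)"
    unfolding trace_inv_iff using key det_H_term by linarith
  assume "0 < trace H"
  then have "0 < p + s" by (simp add: trace_2 He)
  then have "0 < p * (c\<^sup>2 + b\<^sup>2) + s * (a\<^sup>2 + b\<^sup>2) + 2 * r * (- b * (a + c))"
    using adj_sq_pos adj_sq_det by (intro psd_pairing_pos p s ps)
  then show "trace (matrix_inv (F + H)) < trace (matrix_inv F)"
    unfolding trace_inv_iff using key det_H_term by linarith
qed

lemma trace_matrix_inv_ge_2:
  fixes A :: "real^2^2"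
  assumes "psd_matrix A" "0 < det A"
  shows "4 / trace A \<le> trace (matrix_inv A)"
proof -
  have "4 * det A \<le> trace A * trace A"
    using assms(1) sum_squares_ge_zero[of "A$1$1 - A$2$2" "2 * A$1$2"]
    by (simp add: psd_matrix_2_iff det_2 trace_2 power2_eq_square algebra_simps)
  then show ?thesis
    using assms psd_matrix_2_trace_pos[OF assms]
    by (simp add: trace_matrix_inv_2 divide_simps mult.commute)
qed

lemma trace_matrix_inv_weighted_sum_ge:
  fixes K :: "'i \<Rightarrow> real^2^2"
  assumes "\<And>i. i \<in> S \<Longrightarrow> psd_matrix (K i)" "\<And>i. i \<in> S \<Longrightarrow> 0 \<le> w i \<and> w i \<le> c"
    and "invertible (\<Sum>i\<in>S. w i *\<^sub>R K i)"
  shows "trace (matrix_inv (c *\<^sub>R (\<Sum>i\<in>S. K i))) \<le> trace (matrix_inv (\<Sum>i\<in>S. w i *\<^sub>R K i))"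
proof -
  define F where "F = (\<Sum>i\<in>S. w i *\<^sub>R K i)"
  define H where "H = (\<Sum>i\<in>S. (c - w i) *\<^sub>R K i)"
  have "c *\<^sub>R (\<Sum>i\<in>S. K i) = F + H"
    by (simp add: F_def H_def scaleR_sum_right scaleR_diff_left sum_subtractf)
  moreover have "psd_matrix F" "psd_matrix H"
    using assms(1,2) by (auto simp: F_def H_def intro!: psd_matrix_sum psd_matrix_scaleR)
  moreover have "0 < det F"
    using assms(3) \<open>psd_matrix F\<close> by (simp add: F_def psd_matrix_2_invertible_iff)
  ultimately show ?thesis by (simp add: F_def trace_matrix_inv_add_psd_2(1))
qed

lemma norm_power2_2: "(norm u)\<^sup>2 = (u$1)\<^sup>2 + (u$2)\<^sup>2" for u :: "real^2"
  by (simp add: norm_vec_def L2_set_def sum_2)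

definition bearing_info :: "real^2 \<Rightarrow> real^2^2" where
  "bearing_info u = (1 / norm u ^ 4) *\<^sub>R ((norm u)\<^sup>2 *\<^sub>R mat 1 - outer u)"

lemma bearing_info_components:
  fixes u :: "real^2"
  shows "bearing_info u $1$1 = (u$2)\<^sup>2 / norm u ^ 4" "bearing_info u $2$2 = (u$1)\<^sup>2 / norm u ^ 4"
    "bearing_info u $1$2 = - (u$1 * u$2) / norm u ^ 4" "bearing_info u $2$1 = - (u$1 * u$2) / norm u ^ 4"
  using norm_power2_2[of u]
  by (simp_all add: bearing_info_def outer_def mat_def power2_eq_square mult.commute)

lemma psd_bearing_info: "psd_matrix (bearing_info u)"
proof -
  have "(- (u$1 * u$2) / norm u ^ 4)\<^sup>2 = (u$2)\<^sup>2 / norm u ^ 4 * ((u$1)\<^sup>2 / norm u ^ 4)"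
    by (simp add: power2_eq_square)
  then show ?thesis by (simp add: psd_matrix_2_iff bearing_info_components)
qed

lemma trace_bearing_info: "trace (bearing_info u) = 1 / (norm u)\<^sup>2"
proof -
  have "trace (bearing_info u) = (norm u)\<^sup>2 / norm u ^ 4"
    by (simp add: trace_2 bearing_info_components norm_power2_2 add_divide_distrib add.commute)
  also have "\<dots> = 1 / (norm u)\<^sup>2"
    by (cases "u = 0") (simp_all add: power2_eq_square power4_eq_xxxx)
  finally show ?thesis .
qed

definition cross2 :: "real^2 \<Rightarrow> real^2 \<Rightarrow> real" where
  "cross2 a b = a$1 * b$2 - a$2 * b$1"

lemma det_bearing_info_add:
  "det (bearing_info u + bearing_info w) = (cross2 u w)\<^sup>2 / (norm u ^ 4 * norm w ^ 4)"
proof -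
  define \<alpha> \<beta> where "\<alpha> = 1 / norm u ^ 4" and "\<beta> = 1 / norm w ^ 4"
  have "det (bearing_info u + bearing_info w)
      = (\<alpha> * (u$2)\<^sup>2 + \<beta> * (w$2)\<^sup>2) * (\<alpha> * (u$1)\<^sup>2 + \<beta> * (w$1)\<^sup>2)
        - (\<alpha> * (u$1 * u$2) + \<beta> * (w$1 * w$2))\<^sup>2"
    by (simp add: det_2 bearing_info_components \<alpha>_def \<beta>_def power2_eq_square algebra_simps)
  also have "\<dots> = \<alpha> * \<beta> * (cross2 u w)\<^sup>2"
    by (simp add: cross2_def power2_eq_square algebra_simps)
  finally show ?thesis by (simp add: \<alpha>_def \<beta>_def)
qed

lemma cross2_expansion: "cross2 a b *\<^sub>R v = cross2 v b *\<^sub>R a + cross2 a v *\<^sub>R b"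
  by (simp add: cross2_def vec_eq_iff forall_2 algebra_simps)

lemma cross2_nonzero_if_independent:
  assumes "independent {a, b}" "a \<noteq> b"
  shows "cross2 a b \<noteq> 0"
proof
  assume ab: "cross2 a b = 0"
  have "b \<noteq> 0" "a \<notin> span {b}"
    using assms by (auto simp: independent_insert dependent_single)
  define w :: "real^2" where "w = vector [b$2, - b$1]"
  have "cross2 w b = (b$1)\<^sup>2 + (b$2)\<^sup>2"
    by (simp add: w_def cross2_def power2_eq_square)
  then have "cross2 w b \<noteq> 0"
    using \<open>b \<noteq> 0\<close> by (auto simp: vec_eq_iff forall_2 add_nonneg_eq_0_iff)
  moreover have "cross2 w b *\<^sub>R a = - cross2 a w *\<^sub>R b"
    using cross2_expansion[of a b w] ab by (simp add: eq_neg_iff_add_eq_0)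
  ultimately have "a = (- cross2 a w / cross2 w b) *\<^sub>R b"
    by (simp add: field_simps vec_eq_iff)
  then have "a \<in> span {b}" by (metis span_base span_scale insertI1)
  with \<open>a \<notin> span {b}\<close> show False ..
qed

lemma exists_cross2_nonzero:
  assumes "v \<noteq> 0" "\<exists>a\<in>insert v L. \<exists>b\<in>insert v L. a \<noteq> b \<and> independent {a, b}"
  shows "\<exists>l\<in>L. cross2 l v \<noteq> 0"
proof (rule ccontr)
  assume parallel: "\<not> ?thesis"
  obtain a b where ab: "a \<in> insert v L" "b \<in> insert v L" and "a \<noteq> b" "independent {a, b}"
    using assms(2) by blast
  then have "cross2 a b \<noteq> 0" by (intro cross2_nonzero_if_independent)
  moreover have "cross2 a v = 0" "cross2 v b = 0"
    using ab parallel by (auto simp: cross2_def mult.commute)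
  ultimately show False using assms(1) cross2_expansion[of a b v] by simp
qed

lemma lines_norm_bounded_below:
  fixes l :: "'i \<Rightarrow> 'a::real_normed_vector"
  assumes "finite I" "v \<noteq> 0" "\<And>t i. 1 \<le> t \<Longrightarrow> i \<in> I \<Longrightarrow> l i + real t *\<^sub>R v \<noteq> 0"
  shows "\<exists>b>0. \<forall>t\<ge>1. \<forall>i\<in>I. b \<le> norm (l i + real t *\<^sub>R v)"
proof -
  define R where "R = (\<Sum>i\<in>I. norm (l i))"
  obtain N :: nat where N: "R + 1 < real N * norm v"
    using reals_Archimedean3[of "norm v"] assms(2) by auto
  define b where "b = Min (insert 1 ((\<lambda>(t, i). norm (l i + real t *\<^sub>R v)) ` ({1..N} \<times> I)))"
  have "0 < b" unfolding b_def using assms(1,3) by auto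
  moreover have "b \<le> norm (l i + real t *\<^sub>R v)" if "1 \<le> t" "i \<in> I" for t i
  proof (cases "t \<le> N")
    case True
    then show ?thesis unfolding b_def using assms(1) that by (intro Min_le) force+
  next
    case False
    have "norm (l i) \<le> R" unfolding R_def using assms(1) that(2) by (intro member_le_sum) auto
    moreover have "real N * norm v \<le> real t * norm v"
      using False by (intro mult_right_mono) auto
    moreover have "real t * norm v - norm (l i) \<le> norm (l i + real t *\<^sub>R v)"
      using norm_diff_ineq[of "real t *\<^sub>R v" "l i"] by (simp add: add.commute)
    moreover have "b \<le> 1" unfolding b_def using assms(1) by (intro Min_le) auto
    ultimately show ?thesis using N by linarith
  qed
  ultimately show ?thesis by blast
qed

lemma summable_inverse_norm_power2_line:
  fixes l v :: "'a::real_normed_vector"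
  assumes "v \<noteq> 0"
  shows "summable (\<lambda>t. 1 / (norm (l + real t *\<^sub>R v))\<^sup>2)"
proof (rule summable_comparison_test_ev)
  show "summable (\<lambda>t. 4 / (norm v)\<^sup>2 * inverse (real t ^ 2))"
    by (intro summable_mult inverse_power_summable) simp
  obtain N :: nat where N: "2 * norm l < real N * norm v"
    using reals_Archimedean3[of "norm v"] assms by auto
  show "\<forall>\<^sub>F t in sequentially.
      norm (1 / (norm (l + real t *\<^sub>R v))\<^sup>2) \<le> 4 / (norm v)\<^sup>2 * inverse (real t ^ 2)"
    using eventually_ge_at_top[of "max N 1"]
  proof eventually_elim
    case (elim t)
    have "0 < real t * norm v / 2" using elim assms by simp
    moreover have "real N * norm v \<le> real t * norm v"
      using elim by (intro mult_right_mono) auto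
    then have "real t * norm v / 2 \<le> norm (l + real t *\<^sub>R v)"
      using norm_diff_ineq[of "real t *\<^sub>R v" l] N by (simp add: add.commute)
    ultimately have "1 / (norm (l + real t *\<^sub>R v))\<^sup>2 \<le> 1 / (real t * norm v / 2)\<^sup>2"
      by (intro divide_left_mono power_mono mult_pos_pos zero_less_power) auto
    then show ?case using assms elim by (simp add: field_simps power2_eq_square)
  qed
qed

lemma decreasing_bounded_below_tendsto_pos:
  fixes X :: "nat \<Rightarrow> real"
  assumes "\<And>n. N \<le> n \<Longrightarrow> X (Suc n) \<le> X n" "\<And>n. N \<le> n \<Longrightarrow> \<beta> \<le> X n" "0 < \<beta>"
  shows "\<exists>L>0. X \<longlonglongrightarrow> L"
proof -
  have "decseq (\<lambda>n. X (n + N))" by (rule decseq_SucI) (simp add: assms(1))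
  then obtain L where L: "(\<lambda>n. X (n + N)) \<longlonglongrightarrow> L"
    by (rule decseq_convergent[of _ \<beta>]) (auto intro: assms(2))
  then have "\<beta> \<le> L" by (rule LIMSEQ_le_const) (use assms(2) in auto)
  with assms(3) show ?thesis using LIMSEQ_offset[OF L] by (intro exI[of _ L]) auto
qed

lemma dmin_le_norm_dvec: "1 \<le> t \<Longrightarrow> q \<in> {1..Q} \<Longrightarrow> dmin x v ap Q \<le> norm (dvec x v ap t q)"
  unfolding dmin_def by (rule cInf_lower) (auto intro: bdd_belowI[of _ 0])

lemma dmin_pos:
  assumes "1 \<le> Q" "v \<noteq> 0" "\<forall>t\<ge>1. \<forall>q\<in>{1..Q}. x + real t *\<^sub>R v \<noteq> ap q"
  shows "0 < dmin x v ap Q"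
proof -
  have "lvec x ap q + real t *\<^sub>R v \<noteq> 0" if "1 \<le> t" "q \<in> {1..Q}" for t q
    using assms(3) that by (auto simp: lvec_def algebra_simps)
  then obtain b where "0 < b" and b: "\<forall>t\<ge>1. \<forall>q\<in>{1..Q}. b \<le> norm (dvec x v ap t q)"
    using lines_norm_bounded_below[of "{1..Q}" v "lvec x ap"] assms(2) by (auto simp: dvec_def)
  have "b \<le> dmin x v ap Q"
    unfolding dmin_def using assms(1) b by (intro cInf_greatest) auto
  with \<open>0 < b\<close> show ?thesis by linarith
qed

lemma cross2_dvec:
  "cross2 (dvec x v ap s q) (dvec x v ap t q) = (real t - real s) * cross2 (lvec x ap q) v"
  by (simp add: dvec_def cross2_def algebra_simps)

lemma Amat_eq_sum_bearing_info:
  "Amat x v ap Q T = (\<Sum>q=1..Q. \<Sum>t=1..T. bearing_info (dvec x v ap t q))"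
  by (simp add: Amat_def bearing_info_def)

lemma Amat_Suc:
  "Amat x v ap Q (Suc T) = Amat x v ap Q T + (\<Sum>q=1..Q. bearing_info (dvec x v ap (Suc T) q))"
  by (simp add: Amat_def bearing_info_def sum.distrib)

lemma psd_Amat: "psd_matrix (Amat x v ap Q T)"
  by (auto simp: Amat_eq_sum_bearing_info intro: psd_matrix_sum psd_bearing_info)

lemma trace_Amat:
  "trace (Amat x v ap Q T) = (\<Sum>q=1..Q. \<Sum>t=1..T. 1 / (norm (dvec x v ap t q))\<^sup>2)"
  by (simp add: Amat_eq_sum_bearing_info trace_sum trace_bearing_info)

lemma trace_Amat_le:
  assumes "v \<noteq> 0"
  shows "trace (Amat x v ap Q T) \<le> (\<Sum>q=1..Q. \<Sum>t. 1 / (norm (dvec x v ap t q))\<^sup>2)"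
  unfolding trace_Amat dvec_def
  using summable_inverse_norm_power2_line[OF assms] by (intro sum_mono sum_le_suminf) auto

lemma det_Amat_pos:
  assumes "0 < dmin x v ap Q" "q \<in> {1..Q}" "cross2 (lvec x ap q) v \<noteq> 0" "2 \<le> T"
  shows "0 < det (Amat x v ap Q T)"
proof -
  define K where "K = (\<lambda>(q, t). bearing_info (dvec x v ap t q))"
  define S where "S = {1..Q} \<times> {1..T}"
  have A: "Amat x v ap Q T = (K (q, 1) + K (q, 2)) + (\<Sum>i\<in>S - {(q, 1)} - {(q, 2)}. K i)"
  proof -
    have "Amat x v ap Q T = (\<Sum>i\<in>S. K i)"
      by (simp add: Amat_eq_sum_bearing_info K_def S_def sum.cartesian_product)
    also have "\<dots> = K (q, 1) + (\<Sum>i\<in>S - {(q, 1)}. K i)"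
      using assms(2,4) by (intro sum.remove) (auto simp: S_def)
    also have "(\<Sum>i\<in>S - {(q, 1)}. K i) = K (q, 2) + (\<Sum>i\<in>S - {(q, 1)} - {(q, 2)}. K i)"
      using assms(2,4) by (intro sum.remove) (auto simp: S_def)
    finally show ?thesis by (simp add: add.assoc)
  qed
  have "0 < norm (dvec x v ap t q)" if "1 \<le> t" for t
    using dmin_le_norm_dvec[of t q Q x v ap] that assms(1,2) by linarith
  then have "0 < det (K (q, 1) + K (q, 2))"
    using assms(3) by (simp add: K_def det_bearing_info_add cross2_dvec)
  moreover have "psd_matrix (K (q, 1) + K (q, 2))" "psd_matrix (\<Sum>i\<in>S - {(q, 1)} - {(q, 2)}. K i)"
    by (auto simp: K_def intro!: psd_matrix_add psd_matrix_sum psd_bearing_info)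
  ultimately show ?thesis unfolding A using det_add_psd_matrix_2 by (meson order.strict_trans2)
qed

lemma Fmat_eq_sum_bearing_info:
  "Fmat G1 Nt sn2 phi x v ap Q T = (\<Sum>q=1..Q. \<Sum>t=1..T.
     (1 / sigma_theta_sq G1 Nt sn2 (norm (dvec x v ap t q)) (phi t q)) *\<^sub>R
       bearing_info (dvec x v ap t q))"
  unfolding Fmat_def bearing_info_def by (subst sum.swap) (simp add: scaleR_scaleR)

lemma array_gain_pos: "0 < G1 \<Longrightarrow> 2 \<le> Nt \<Longrightarrow> 0 < G1 * real Nt * (real Nt ^ 2 - 1)"
proof -
  assume "0 < G1" "2 \<le> Nt"
  moreover have "(2::real) ^ 2 \<le> real Nt ^ 2" using \<open>2 \<le> Nt\<close> by (intro power_mono) auto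
  ultimately show ?thesis by simp
qed

lemma C0_pos: "0 < G1 \<Longrightarrow> 0 < sn2 \<Longrightarrow> 2 \<le> Nt \<Longrightarrow> 0 < dm \<Longrightarrow> 0 < C0 G1 Nt sn2 dm"
  using array_gain_pos[of G1 Nt] by (simp add: C0_def)

lemma inverse_sigma_theta_sq_bounds:
  assumes "0 < G1" "0 < sn2" "2 \<le> Nt" "0 < dm" "dm \<le> d"
  shows "0 \<le> 1 / sigma_theta_sq G1 Nt sn2 d ph" "1 / sigma_theta_sq G1 Nt sn2 d ph \<le> C0 G1 Nt sn2 dm"
proof -
  define k where "k = G1 * real Nt * (real Nt ^ 2 - 1)"
  have k: "0 < k" unfolding k_def using assms(1,3) by (rule array_gain_pos)
  have w: "1 / sigma_theta_sq G1 Nt sn2 d ph = k * (cos ph)\<^sup>2 / (sn2 * d\<^sup>2)"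
    by (simp add: sigma_theta_sq_def k_def mult.commute)
  show "0 \<le> 1 / sigma_theta_sq G1 Nt sn2 d ph" using k assms(2) by (simp add: w)
  have "k * (cos ph)\<^sup>2 \<le> k" using k by (simp add: mult_le_cancel_left1 abs_square_le_1)
  moreover have "sn2 * dm\<^sup>2 \<le> sn2 * d\<^sup>2" using assms(2,4,5) by (simp add: power_mono)
  ultimately show "1 / sigma_theta_sq G1 Nt sn2 d ph \<le> C0 G1 Nt sn2 dm"
    using k assms(2,4) by (simp add: w C0_def k_def[symmetric] frac_le)
qed

lemma inverse_sigma_theta_sq_at_dmin: "1 / sigma_theta_sq G1 Nt sn2 dm 0 = C0 G1 Nt sn2 dm"
  by (simp add: sigma_theta_sq_def C0_def mult.commute)

lemma Delta_bar_le_CRLB: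
  assumes "0 < G1" "0 < sn2" "2 \<le> Nt" "0 < dmin x v ap Q"
    and "invertible (Fmat G1 Nt sn2 phi x v ap Q T)"
  shows "Delta_bar G1 Nt sn2 x v ap Q T \<le> CRLB G1 Nt sn2 phi x v ap Q T"
proof -
  define K where "K = (\<lambda>(q, t). bearing_info (dvec x v ap t q))"
  define w where "w = (\<lambda>(q, t). 1 / sigma_theta_sq G1 Nt sn2 (norm (dvec x v ap t q)) (phi t q))"
  define S where "S = {1..Q} \<times> {1..T}"
  have A: "Amat x v ap Q T = (\<Sum>i\<in>S. K i)"
    by (simp add: Amat_eq_sum_bearing_info K_def S_def sum.cartesian_product)
  have F: "Fmat G1 Nt sn2 phi x v ap Q T = (\<Sum>i\<in>S. w i *\<^sub>R K i)"
    by (simp add: Fmat_eq_sum_bearing_info K_def w_def S_def sum.cartesian_product case_prod_unfold)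
  have "w i \<le> C0 G1 Nt sn2 (dmin x v ap Q)" "0 \<le> w i" if "i \<in> S" for i
    using that by (auto simp: w_def S_def intro!: inverse_sigma_theta_sq_bounds assms(1-4)
        dmin_le_norm_dvec)
  then show ?thesis
    unfolding Delta_bar_def CRLB_def A F using assms(5)[unfolded F]
    by (intro trace_matrix_inv_weighted_sum_ge) (auto simp: K_def psd_bearing_info)
qed

lemma CRLB_eq_Delta_bar:
  assumes "\<forall>t\<in>{1..T}. \<forall>q\<in>{1..Q}. norm (dvec x v ap t q) = dmin x v ap Q \<and> phi t q = 0"
  shows "CRLB G1 Nt sn2 phi x v ap Q T = Delta_bar G1 Nt sn2 x v ap Q T"
proof -
  have "Fmat G1 Nt sn2 phi x v ap Q T = C0 G1 Nt sn2 (dmin x v ap Q) *\<^sub>R Amat x v ap Q T"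
    using assms
    unfolding Fmat_eq_sum_bearing_info Amat_eq_sum_bearing_info sum.cartesian_product scaleR_sum_right
    by (intro sum.cong) (auto simp: inverse_sigma_theta_sq_at_dmin)
  then show ?thesis by (simp add: CRLB_def Delta_bar_def)
qed

lemma Delta_bar_Suc_less:
  assumes "0 < G1" "0 < sn2" "2 \<le> Nt" "0 < dmin x v ap Q" "1 \<le> Q"
    and "invertible (Amat x v ap Q T)"
  shows "Delta_bar G1 Nt sn2 x v ap Q (Suc T) < Delta_bar G1 Nt sn2 x v ap Q T"
proof -
  define C where "C = C0 G1 Nt sn2 (dmin x v ap Q)"
  define F where "F = C *\<^sub>R Amat x v ap Q T"
  define H where "H = C *\<^sub>R (\<Sum>q=1..Q. bearing_info (dvec x v ap (Suc T) q))"
  have C: "0 < C" unfolding C_def using assms(1-4) by (rule C0_pos)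
  have "psd_matrix F" using C by (simp add: F_def psd_matrix_scaleR psd_Amat)
  moreover have "0 < det F"
    using assms(6) C by (simp add: F_def det_scaleR_2 psd_matrix_2_invertible_iff[OF psd_Amat])
  moreover have "psd_matrix H"
    using C by (auto simp: H_def intro!: psd_matrix_scaleR psd_matrix_sum psd_bearing_info)
  moreover have "0 < trace H"
  proof -
    have "0 < norm (dvec x v ap (Suc T) q)" if "q \<in> {1..Q}" for q
      using dmin_le_norm_dvec[of "Suc T" q Q x v ap] that assms(4) by linarith
    then have "0 < (\<Sum>q=1..Q. 1 / (norm (dvec x v ap (Suc T) q))\<^sup>2)"
      using assms(5) by (intro sum_pos) auto
    then show ?thesis using C by (simp add: H_def trace_scaleR trace_sum trace_bearing_info)
  qed
  ultimately have "trace (matrix_inv (F + H)) < trace (matrix_inv F)"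
    by (rule trace_matrix_inv_add_psd_2(2))
  then show ?thesis
    by (simp add: Delta_bar_def Amat_Suc F_def H_def C_def scaleR_add_right)
qed

lemma Delta_bar_tendsto_pos:
  assumes "0 < G1" "0 < sn2" "2 \<le> Nt" "0 < dmin x v ap Q" "1 \<le> Q" "v \<noteq> 0"
    and "q \<in> {1..Q}" "cross2 (lvec x ap q) v \<noteq> 0"
  shows "\<exists>L>0. (\<lambda>T. Delta_bar G1 Nt sn2 x v ap Q T) \<longlonglongrightarrow> L"
proof -
  define C where "C = C0 G1 Nt sn2 (dmin x v ap Q)"
  define B where "B = (\<Sum>q=1..Q. \<Sum>t. 1 / (norm (dvec x v ap t q))\<^sup>2)"
  have C: "0 < C" unfolding C_def using assms(1-4) by (rule C0_pos)
  have det: "0 < det (Amat x v ap Q T)" if "2 \<le> T" for T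
    using det_Amat_pos[OF assms(4,7,8) that] .
  have trace: "0 < trace (Amat x v ap Q T)" "trace (Amat x v ap Q T) \<le> B" if "2 \<le> T" for T
    using psd_matrix_2_trace_pos[OF psd_Amat det[OF that]] trace_Amat_le[OF assms(6)]
    by (simp_all add: B_def)
  have lower: "4 / (C * B) \<le> Delta_bar G1 Nt sn2 x v ap Q T" if "2 \<le> T" for T
  proof -
    have "4 / (C * B) \<le> 4 / trace (C *\<^sub>R Amat x v ap Q T)"
      using C trace[OF that] by (simp add: trace_scaleR frac_le mult_left_mono)
    also have "\<dots> \<le> Delta_bar G1 Nt sn2 x v ap Q T"
      unfolding Delta_bar_def C_def[symmetric] using C det[OF that]
      by (intro trace_matrix_inv_ge_2 psd_matrix_scaleR psd_Amat) (auto simp: det_scaleR_2)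
    finally show ?thesis .
  qed
  have decreasing: "Delta_bar G1 Nt sn2 x v ap Q (Suc T) \<le> Delta_bar G1 Nt sn2 x v ap Q T"
    if "2 \<le> T" for T
    using Delta_bar_Suc_less[OF assms(1-5)] det[OF that]
    by (simp add: psd_matrix_2_invertible_iff[OF psd_Amat] less_imp_le)
  have "0 < 4 / (C * B)" using C trace[of 2] by simp
  with decreasing lower show ?thesis by (rule decreasing_bounded_below_tendsto_pos)
qed

theorem proposition1:
  fixes ap :: "nat \<Rightarrow> real^2" and x v :: "real^2" and Q Nt :: nat
    and G1 sn2 :: real and phi :: "nat \<Rightarrow> nat \<Rightarrow> real"
  assumes Q: "Q \<ge> 1"
    and v: "v \<noteq> 0"
    and no_AP: "\<forall>t\<ge>1. \<forall>q\<in>{1..Q}. x + real t *\<^sub>R v \<noteq> ap q"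
    and G1: "G1 > 0" and sn2: "sn2 > 0" and Nt: "Nt \<ge> 2"
    and phi: "\<forall>t\<ge>1. \<forall>q\<in>{1..Q}. cos (phi t q) \<noteq> 0"
  shows "(\<forall>T\<ge>1. invertible (Fmat G1 Nt sn2 phi x v ap Q T) \<longrightarrow>
            CRLB G1 Nt sn2 phi x v ap Q T \<ge> Delta_bar G1 Nt sn2 x v ap Q T \<and>
            ((\<forall>t\<in>{1..T}. \<forall>q\<in>{1..Q}. norm (dvec x v ap t q) = dmin x v ap Q \<and> phi t q = 0)
               \<longrightarrow> CRLB G1 Nt sn2 phi x v ap Q T = Delta_bar G1 Nt sn2 x v ap Q T))
         \<and> ((\<exists>a\<in>insert v (lvec x ap ` {1..Q}). \<exists>b\<in>insert v (lvec x ap ` {1..Q}).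
                a \<noteq> b \<and> independent {a, b}) \<longrightarrow>
            (\<forall>T\<ge>1. invertible (Amat x v ap Q T) \<longrightarrow>
                Delta_bar G1 Nt sn2 x v ap Q (Suc T) < Delta_bar G1 Nt sn2 x v ap Q T) \<and>
            (\<exists>L>0. (\<lambda>T. Delta_bar G1 Nt sn2 x v ap Q T) \<longlonglongrightarrow> L))"
proof -
  have dmin: "0 < dmin x v ap Q" using Q v no_AP by (rule dmin_pos)
  show ?thesis
  proof (intro conjI allI impI)
    fix T
    assume "invertible (Fmat G1 Nt sn2 phi x v ap Q T)"
    then show "Delta_bar G1 Nt sn2 x v ap Q T \<le> CRLB G1 Nt sn2 phi x v ap Q T"
      by (rule Delta_bar_le_CRLB[OF G1 sn2 Nt dmin])
  next
    fix T
    assume "\<forall>t\<in>{1..T}. \<forall>q\<in>{1..Q}. norm (dvec x v ap t q) = dmin x v ap Q \<and> phi t q = 0"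
    then show "CRLB G1 Nt sn2 phi x v ap Q T = Delta_bar G1 Nt sn2 x v ap Q T"
      by (rule CRLB_eq_Delta_bar)
  next
    fix T
    assume "invertible (Amat x v ap Q T)"
    then show "Delta_bar G1 Nt sn2 x v ap Q (Suc T) < Delta_bar G1 Nt sn2 x v ap Q T"
      by (rule Delta_bar_Suc_less[OF G1 sn2 Nt dmin Q])
  next
    assume indep: "\<exists>a\<in>insert v (lvec x ap ` {1..Q}). \<exists>b\<in>insert v (lvec x ap ` {1..Q}).
        a \<noteq> b \<and> independent {a, b}"
    obtain q where "q \<in> {1..Q}" "cross2 (lvec x ap q) v \<noteq> 0"
      using exists_cross2_nonzero[OF v indep] by blast
    then show "\<exists>L>0. (\<lambda>T. Delta_bar G1 Nt sn2 x v ap Q T) \<longlonglongrightarrow> L"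
      by (rule Delta_bar_tendsto_pos[OF G1 sn2 Nt dmin Q v])
  qed
qed

end
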